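(* Let $m$, $\alpha$, $\bar R>1/\sqrt2$, $\Omega$ be as in the context, let $E\in C^{0,\alpha}_\ast(\Omega)$ and let $v\in C^{2,\alpha}_\ast(\Omega)$ be the solution of $\Delta v-\xi\cdot\nabla v+v=E$ in $\Omega$, $v|_{\partial\Omega}=0$. Then for all $\xi\in\Omega$, $$|v(\xi)|\le k|\xi|,\qquad k=\frac{\sup_{\eta\in\Omega}|E(\eta)|\,|\eta|}{2\bar R^2-1}.$$
   Context: $\Omega=\mathbf R^2\setminus B_{\bar R}$ with $B_{\bar R}$ the open disk of radius $\bar R$ at the origin; $m\ge1$ integer, $\alpha\in(0,1)$. For $\xi\in\Omega$, $B(\xi)$ is the unit ball about $\xi$, $[g]_{\alpha,B}$ the Hölder seminorm on $B$. For $r=0,2$, $\|v:C^{r,\alpha}_\ast(\Omega)\|=\max\big(\max_{0\le j\le r}\sup_\Omega|D^jv(\xi)||\xi|^{-r+1+j},\ \sup_\Omega[D^rv]_{\alpha,B(\xi)\cap\Omega}|\xi|^{1+\alpha}\big)$, and $C^{r,\alpha}_\ast(\Omega)$ is the space of $C^{r,\alpha}_{loc}$ functions with finite norm satisfying $v(x,-y)=-v(x,y)$ and $v(\rho_k\xi)=v(\xi)$ for all $k\in\mathbf Z$, $\rho_k$ being the reflection across the line through the origin at angle $\frac{\pi}{2m}+\frac{k\pi}{m}$ with the $x$-axis. *)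

theory Defs
  imports "HOL-Analysis.Analysis"
begin

type_synonym pt = "real \<times> real"

definition Omega :: "real \<Rightarrow> pt set" where
  "Omega R = {\<xi>. norm \<xi> \<ge> R}"

definition refl_line :: "real \<Rightarrow> pt \<Rightarrow> pt" where
  "refl_line th p = (cos (2*th) * fst p + sin (2*th) * snd p,
                     sin (2*th) * fst p - cos (2*th) * snd p)"

definition rho :: "nat \<Rightarrow> int \<Rightarrow> pt \<Rightarrow> pt" where
  "rho m k = refl_line (pi / (2 * real m) + real_of_int k * pi / real m)"

definition sym_star :: "real \<Rightarrow> nat \<Rightarrow> (pt \<Rightarrow> real) \<Rightarrow> bool" where
  "sym_star R m v \<longleftrightarrow>
     (\<forall>x y. (x, y) \<in> Omega R \<longrightarrow> v (x, -y) = - v (x, y)) \<and>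
     (\<forall>k::int. \<forall>\<xi>\<in>Omega R. v (rho m k \<xi>) = v \<xi>)"

definition wsup_fin :: "real \<Rightarrow> real \<Rightarrow> (pt \<Rightarrow> 'b::real_normed_vector) \<Rightarrow> bool" where
  "wsup_fin R p f \<longleftrightarrow> (\<exists>C. \<forall>\<xi>\<in>Omega R. norm (f \<xi>) * norm \<xi> powr p \<le> C)"

definition wholder_fin :: "real \<Rightarrow> real \<Rightarrow> (pt \<Rightarrow> 'b::real_normed_vector) \<Rightarrow> bool" where
  "wholder_fin R \<alpha> g \<longleftrightarrow>
     (\<exists>C. \<forall>\<xi>\<in>Omega R. \<forall>x\<in>ball \<xi> 1 \<inter> Omega R. \<forall>y\<in>ball \<xi> 1 \<inter> Omega R.
        norm (g x - g y) * norm \<xi> powr (1 + \<alpha>) \<le> C * dist x y powr \<alpha>)"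

definition C0a_star :: "real \<Rightarrow> nat \<Rightarrow> real \<Rightarrow> (pt \<Rightarrow> real) \<Rightarrow> bool" where
  "C0a_star R m \<alpha> E \<longleftrightarrow>
     continuous_on (Omega R) E \<and> wsup_fin R 1 E \<and> wholder_fin R \<alpha> E \<and> sym_star R m E"

definition C2a_star :: "real \<Rightarrow> nat \<Rightarrow> real \<Rightarrow> (pt \<Rightarrow> real)
    \<Rightarrow> (pt \<Rightarrow> pt \<Rightarrow>\<^sub>L real) \<Rightarrow> (pt \<Rightarrow> pt \<Rightarrow>\<^sub>L (pt \<Rightarrow>\<^sub>L real)) \<Rightarrow> bool" where
  "C2a_star R m \<alpha> v Dv D2v \<longleftrightarrow>
     (\<forall>x\<in>Omega R. (v has_derivative blinfun_apply (Dv x)) (at x within Omega R)) \<and>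
     (\<forall>x\<in>Omega R. (Dv has_derivative blinfun_apply (D2v x)) (at x within Omega R)) \<and>
     continuous_on (Omega R) D2v \<and>
     wsup_fin R (-1) v \<and> wsup_fin R 0 Dv \<and> wsup_fin R 1 D2v \<and>
     wholder_fin R \<alpha> D2v \<and> sym_star R m v"

definition laplacian :: "(pt \<Rightarrow>\<^sub>L (pt \<Rightarrow>\<^sub>L real)) \<Rightarrow> real" where
  "laplacian H = blinfun_apply (blinfun_apply H (1,0)) (1,0)
               + blinfun_apply (blinfun_apply H (0,1)) (0,1)"

end

theory Submission
  imports Defs
begin

text \<open>
  The proof is a comparison argument with radial functions.

  On radial functions \<open>F(|\<xi>|)\<close> the operator acts as \<open>F'' + F'/r - r F' + F\<close>, and
  \<open>L r = 1/r\<close>, \<open>L (1/r) = 2/r + 1/r\<^sup>3\<close>, \<open>L r\<^sup>2 = 4 - r\<^sup>2\<close>.  Hence the barrier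
  \<open>\<Phi> = k (r - R\<^sup>2/r)\<close> with \<open>k (2R\<^sup>2 - 1) = S\<close> vanishes on \<open>|\<xi>| = R\<close> and satisfies
  \<open>L \<Phi> \<le> -S/r\<close>, while \<open>\<psi> = r - 1/(2r) + r\<^sup>2/100\<close> is positive, grows like \<open>r\<^sup>2\<close> and has
  \<open>L \<psi> < 0\<close>.  If \<open>L v \<ge> -S/r\<close>, \<open>v = 0\<close> on the boundary and \<open>v\<close> grows at most linearly,
  then \<open>(v - \<Phi>)/\<psi>\<close> tends to 0 at infinity; were it positive somewhere, it would attain a
  positive maximum \<open>M\<close> at an interior point \<open>p\<close>, where \<open>\<Phi> + M\<psi>\<close> touches \<open>v\<close> from above.
  Comparing first and second derivatives along the two coordinate lines through \<open>p\<close> gives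
  \<open>L v(p) \<le> L(\<Phi> + M\<psi>)(p) < -S/|p|\<close>, a contradiction.  So \<open>v \<le> \<Phi> \<le> k|\<xi>|\<close>, and the
  same applied to \<open>-v\<close> yields the two-sided bound of the main theorem.
\<close>

lemma second_deriv_test:
  fixes h h' :: "real \<Rightarrow> real"
  assumes d: "0 < d"
    and hd: "\<And>t. \<bar>t\<bar> < d \<Longrightarrow> (h has_real_derivative h' t) (at t)"
    and h2: "(h' has_real_derivative c) (at 0)"
    and mx: "\<And>t. \<bar>t\<bar> < d \<Longrightarrow> h t \<le> h 0"
  shows "h' 0 = 0" and "c \<le> 0"
proof -
  show "h' 0 = 0"
    by (rule DERIV_local_max[OF hd[of 0] d]) (use d mx in auto)
  show "c \<le> 0"
  proof (rule ccontr)
    assume "\<not> c \<le> 0"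
    then obtain e where e: "e > 0" and inc: "\<And>t. 0 < t \<Longrightarrow> t < e \<Longrightarrow> h' 0 < h' (0 + t)"
      using DERIV_pos_inc_right[OF h2] by force
    define t where "t = min e d / 2"
    have t: "0 < t" "t < e" "t < d" using e d by (auto simp: t_def)
    obtain s where s: "0 < s" "s < t" and mvt: "h t - h 0 = (t - 0) * h' s"
      using MVT2[of 0 t h h'] t hd by force
    have "h' s > 0" using inc[of s] s t \<open>h' 0 = 0\<close> by simp
    then have "t * h' s > 0" using t by simp
    then have "h t > h 0" using mvt by simp
    with mx[of t] t show False by simp
  qed
qed

lemma line_has_derivative:
  "((\<lambda>t. p + t *\<^sub>R e) has_derivative (\<lambda>s. s *\<^sub>R e)) (at t)"
  by (auto intro!: derivative_eq_intros)

lemma norm_along_line: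
  fixes p e :: "'a::real_inner"
  assumes e: "norm e = 1" and nz: "p + t *\<^sub>R e \<noteq> 0"
  shows "((\<lambda>t. norm (p + t *\<^sub>R e)) has_real_derivative (p \<bullet> e + t) / norm (p + t *\<^sub>R e)) (at t)"
proof -
  have ee: "e \<bullet> e = 1" using e by (simp add: norm_eq_sqrt_inner)
  have "((\<lambda>t. norm (p + t *\<^sub>R e)) has_derivative (\<lambda>s. (s *\<^sub>R e) \<bullet> sgn (p + t *\<^sub>R e))) (at t)"
    by (rule has_derivative_compose[OF line_has_derivative has_derivative_norm[OF nz]])
  then show ?thesis
    unfolding has_field_derivative_def
    by (rule has_derivative_eq_rhs) (use ee in \<open>auto simp: fun_eq_iff sgn_div_norm inner_add_right inner_commute
                                     add_divide_distrib divide_inverse algebra_simps\<close>)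
qed

lemma line_deriv:
  fixes v :: "'a::real_normed_vector \<Rightarrow> real" and Dv :: "'a \<Rightarrow> 'a \<Rightarrow>\<^sub>L real"
  assumes "(v has_derivative blinfun_apply (Dv (p + t *\<^sub>R e))) (at (p + t *\<^sub>R e))"
  shows "((\<lambda>t. v (p + t *\<^sub>R e)) has_real_derivative Dv (p + t *\<^sub>R e) e) (at t)"
proof -
  have "((\<lambda>t. v (p + t *\<^sub>R e)) has_derivative (\<lambda>s. Dv (p + t *\<^sub>R e) (s *\<^sub>R e))) (at t)"
    by (rule has_derivative_compose[OF line_has_derivative assms])
  then show ?thesis
    unfolding has_field_derivative_def
    by (rule has_derivative_eq_rhs) (auto simp: blinfun.scaleR_right)
qed

lemma line_deriv2:
  fixes Dv :: "'a::real_normed_vector \<Rightarrow> 'a \<Rightarrow>\<^sub>L real" and D2v :: "'a \<Rightarrow> 'a \<Rightarrow>\<^sub>L ('a \<Rightarrow>\<^sub>L real)"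
  assumes "(Dv has_derivative blinfun_apply (D2v p)) (at p)"
  shows "((\<lambda>t. Dv (p + t *\<^sub>R e) e) has_real_derivative D2v p e e) (at 0)"
proof -
  have "((\<lambda>t. Dv (p + t *\<^sub>R e)) has_derivative (\<lambda>s. D2v p (s *\<^sub>R e))) (at 0)"
    using has_derivative_compose[OF line_has_derivative[of p e 0]] assms by simp
  from bounded_linear.has_derivative[OF blinfun.bounded_linear_left this]
  have "((\<lambda>t. Dv (p + t *\<^sub>R e) e) has_derivative (\<lambda>s. D2v p (s *\<^sub>R e) e)) (at 0)" .
  then show ?thesis
    unfolding has_field_derivative_def
    by (rule has_derivative_eq_rhs) (auto simp: blinfun.scaleR_right blinfun.scaleR_left)
qed

lemma radial_along_line:
  fixes p e :: "'a::real_inner" and F F' :: "real \<Rightarrow> real"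
  assumes "norm e = 1" and "p + t *\<^sub>R e \<noteq> 0"
    and "(F has_real_derivative F' (norm (p + t *\<^sub>R e))) (at (norm (p + t *\<^sub>R e)))"
  shows "((\<lambda>t. F (norm (p + t *\<^sub>R e))) has_real_derivative
           F' (norm (p + t *\<^sub>R e)) * ((p \<bullet> e + t) / norm (p + t *\<^sub>R e))) (at t)"
  using DERIV_chain2[OF assms(3) norm_along_line[OF assms(1,2)]] by (simp add: mult.commute)

lemma radial_along_line2:
  fixes p e :: "'a::real_inner" and F' F'' :: "real \<Rightarrow> real"
  assumes e: "norm e = 1" and p: "p \<noteq> 0"
    and d2F: "(F' has_real_derivative F'' (norm p)) (at (norm p))"
  shows "((\<lambda>t. F' (norm (p + t *\<^sub>R e)) * ((p \<bullet> e + t) / norm (p + t *\<^sub>R e))) has_real_derivative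
           F'' (norm p) * (p \<bullet> e / norm p)^2 + F' (norm p) * (1 / norm p - (p \<bullet> e)^2 / norm p ^ 3)) (at 0)"
proof -
  have r: "((\<lambda>t. norm (p + t *\<^sub>R e)) has_real_derivative p \<bullet> e / norm p) (at 0)"
    using norm_along_line[OF e, of p 0] p by simp
  have "(F' has_real_derivative F'' (norm p)) (at (norm (p + 0 *\<^sub>R e)))" using d2F by simp
  from DERIV_chain2[OF this r]
  have "((\<lambda>t. F' (norm (p + t *\<^sub>R e))) has_real_derivative F'' (norm p) * (p \<bullet> e / norm p)) (at 0)" .
  moreover have "((\<lambda>t. (p \<bullet> e + t) / norm (p + t *\<^sub>R e)) has_real_derivative
      (1 * norm p - (p \<bullet> e + 0) * (p \<bullet> e / norm p)) / (norm p * norm p)) (at 0)"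
    using DERIV_divide[OF DERIV_add[OF DERIV_const DERIV_ident] r] p by simp
  ultimately have "((\<lambda>t. F' (norm (p + t *\<^sub>R e)) * ((p \<bullet> e + t) / norm (p + t *\<^sub>R e))) has_real_derivative
      F'' (norm p) * (p \<bullet> e / norm p) * ((p \<bullet> e + 0) / norm p)
      + (1 * norm p - (p \<bullet> e + 0) * (p \<bullet> e / norm p)) / (norm p * norm p) * F' (norm p)) (at 0)"
    using DERIV_mult by fastforce
  then show ?thesis
    by (rule DERIV_cong) (use p in \<open>simp add: field_simps power2_eq_square power3_eq_cube\<close>)
qed

lemma radial_touching_directional:
  fixes v :: "'a::real_inner \<Rightarrow> real" and Dv :: "'a \<Rightarrow> 'a \<Rightarrow>\<^sub>L real"
    and D2v :: "'a \<Rightarrow> 'a \<Rightarrow>\<^sub>L ('a \<Rightarrow>\<^sub>L real)" and F F' F'' :: "real \<Rightarrow> real"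
  assumes \<delta>: "0 < \<delta>" "\<delta> \<le> norm p"
    and dv: "\<forall>x\<in>ball p \<delta>. (v has_derivative Dv x) (at x)"
    and d2v: "(Dv has_derivative D2v p) (at p)"
    and dF: "\<forall>r>0. (F has_real_derivative F' r) (at r)"
    and d2F: "(F' has_real_derivative F'' (norm p)) (at (norm p))"
    and below: "\<forall>x\<in>ball p \<delta>. v x \<le> F (norm x)" and touch: "v p = F (norm p)"
    and e: "norm e = 1"
  shows "Dv p e = F' (norm p) * (p \<bullet> e / norm p)"
    and "D2v p e e \<le> F'' (norm p) * (p \<bullet> e / norm p)^2 + F' (norm p) * (1 / norm p - (p \<bullet> e)^2 / norm p ^ 3)"
proof -
  define h where "h t = v (p + t *\<^sub>R e) - F (norm (p + t *\<^sub>R e))" for t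
  define h' where "h' t = Dv (p + t *\<^sub>R e) e - F' (norm (p + t *\<^sub>R e)) * ((p \<bullet> e + t) / norm (p + t *\<^sub>R e))" for t
  have near: "p + t *\<^sub>R e \<in> ball p \<delta>" and nz: "0 < norm (p + t *\<^sub>R e)" if "\<bar>t\<bar> < \<delta>" for t
  proof -
    show "p + t *\<^sub>R e \<in> ball p \<delta>" using that e by (simp add: dist_norm)
    have "norm p \<le> norm (p + t *\<^sub>R e) + norm (t *\<^sub>R e)"
      by (metis add_diff_cancel norm_triangle_ineq4)
    moreover have "norm (t *\<^sub>R e) = \<bar>t\<bar>" using e by simp
    ultimately show "0 < norm (p + t *\<^sub>R e)" using that \<delta> by linarith
  qed
  have "(h has_real_derivative h' t) (at t)" if "\<bar>t\<bar> < \<delta>" for t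
    unfolding h_def h'_def
  proof (rule DERIV_diff[OF line_deriv radial_along_line[OF e]])
    show "(v has_derivative blinfun_apply (Dv (p + t *\<^sub>R e))) (at (p + t *\<^sub>R e))"
      using dv near[OF that] by blast
    show "p + t *\<^sub>R e \<noteq> 0" using nz[OF that] by auto
    show "(F has_real_derivative F' (norm (p + t *\<^sub>R e))) (at (norm (p + t *\<^sub>R e)))"
      using dF nz[OF that] by blast
  qed
  moreover have "(h' has_real_derivative D2v p e e -
      (F'' (norm p) * (p \<bullet> e / norm p)^2 + F' (norm p) * (1 / norm p - (p \<bullet> e)^2 / norm p ^ 3))) (at 0)"
    unfolding h'_def using \<delta> by (intro DERIV_diff line_deriv2 radial_along_line2 d2v e d2F) auto
  moreover have "h t \<le> h 0" if "\<bar>t\<bar> < \<delta>" for t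
    using below near[OF that] touch by (simp add: h_def)
  ultimately have "h' 0 = 0" "D2v p e e -
      (F'' (norm p) * (p \<bullet> e / norm p)^2 + F' (norm p) * (1 / norm p - (p \<bullet> e)^2 / norm p ^ 3)) \<le> 0"
    using second_deriv_test[OF \<delta>(1)] by blast+
  then show "Dv p e = F' (norm p) * (p \<bullet> e / norm p)"
    and "D2v p e e \<le> F'' (norm p) * (p \<bullet> e / norm p)^2 + F' (norm p) * (1 / norm p - (p \<bullet> e)^2 / norm p ^ 3)"
    by (simp_all add: h'_def)
qed

text \<open>The operator \<open>\<Delta> - \<xi>\<cdot>\<nabla> + 1\<close> applied to a radial function \<open>F(|\<xi>|)\<close>,
  expressed through the profile and its first two derivatives at radius \<open>r\<close>.\<close>
definition radial_op :: "(real \<Rightarrow> real) \<Rightarrow> (real \<Rightarrow> real) \<Rightarrow> (real \<Rightarrow> real) \<Rightarrow> real \<Rightarrow> real" where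
  "radial_op F F' F'' r = F'' r + F' r / r - r * F' r + F r"

text \<open>Touching from above in the plane: summing the directional comparisons over the two
  coordinate directions bounds \<open>L v(p)\<close> by the radial operator of the touching profile.\<close>
lemma radial_touching_operator:
  fixes v :: "pt \<Rightarrow> real" and Dv :: "pt \<Rightarrow> pt \<Rightarrow>\<^sub>L real"
    and D2v :: "pt \<Rightarrow> pt \<Rightarrow>\<^sub>L (pt \<Rightarrow>\<^sub>L real)" and F F' F'' :: "real \<Rightarrow> real"
  assumes \<delta>: "0 < \<delta>" "\<delta> \<le> norm p"
    and dv: "\<forall>x\<in>ball p \<delta>. (v has_derivative Dv x) (at x)"
    and d2v: "(Dv has_derivative D2v p) (at p)"
    and dF: "\<forall>r>0. (F has_real_derivative F' r) (at r)"
    and d2F: "(F' has_real_derivative F'' (norm p)) (at (norm p))"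
    and below: "\<forall>x\<in>ball p \<delta>. v x \<le> F (norm x)" and touch: "v p = F (norm p)"
  shows "laplacian (D2v p) - Dv p p + v p \<le> radial_op F F' F'' (norm p)"
proof -
  obtain a b where p: "p = (a, b)" by fastforce
  define r where "r = norm p"
  have r: "0 < r" "a^2 + b^2 = r^2" using \<delta> by (simp_all add: r_def p norm_Pair del: real_sqrt_gt_0_iff)
  have e: "norm (1::real, 0::real) = 1" "norm (0::real, 1::real) = 1" by (simp_all add: norm_Pair)
  have pe: "p \<bullet> (1, 0) = a" "p \<bullet> (0, 1) = b" by (simp_all add: p)
  note dir1 = radial_touching_directional
    [where v=v and Dv=Dv and D2v=D2v and F=F and F'=F' and F''=F'' and p=p and \<delta>=\<delta> and e="(1,0)",
     OF \<delta> dv d2v dF d2F below touch e(1)]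
  note dir2 = radial_touching_directional
    [where v=v and Dv=Dv and D2v=D2v and F=F and F'=F' and F''=F'' and p=p and \<delta>=\<delta> and e="(0,1)",
     OF \<delta> dv d2v dF d2F below touch e(2)]
  have "Dv p (a *\<^sub>R (1, 0) + b *\<^sub>R (0, 1)) = a * Dv p (1, 0) + b * Dv p (0, 1)"
    by (simp only: blinfun.add_right blinfun.scaleR_right real_scaleR_def)
  then have "Dv p p = a * Dv p (1, 0) + b * Dv p (0, 1)" by (simp add: p)
  also have "\<dots> = F' r * ((a^2 + b^2) / r)"
    using dir1(1) dir2(1) by (simp add: pe r_def[symmetric] power2_eq_square add_divide_distrib algebra_simps)
  also have "\<dots> = r * F' r"
    using r by (simp add: power2_eq_square)
  finally have grad: "Dv p p = r * F' r" .
  have "laplacian (D2v p) \<le> (F'' r * (a / r)^2 + F' r * (1 / r - a^2 / r^3))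
                              + (F'' r * (b / r)^2 + F' r * (1 / r - b^2 / r^3))"
    using dir1(2) dir2(2) unfolding laplacian_def pe r_def[symmetric] by linarith
  also have "\<dots> = F'' r * ((a^2 + b^2) / r^2) + F' r * (2 / r - (a^2 + b^2) / r^3)"
    by (simp add: power_divide add_divide_distrib diff_divide_distrib algebra_simps)
  also have "\<dots> = F'' r + F' r / r"
    unfolding r(2) using r(1) by (simp add: field_simps power2_eq_square power3_eq_cube)
  finally show ?thesis
    using grad touch by (simp add: radial_op_def r_def)
qed

lemma profile_radial_op:
  fixes al be ga r :: real
  assumes r: "r \<noteq> 0"
  shows "((\<lambda>r. al*r + be/r + ga*r^2) has_real_derivative al - be/r^2 + 2*ga*r) (at r)"
    and "((\<lambda>r. al - be/r^2 + 2*ga*r) has_real_derivative 2*be/r^3 + 2*ga) (at r)"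
    and "radial_op (\<lambda>r. al*r + be/r + ga*r^2) (\<lambda>r. al - be/r^2 + 2*ga*r) (\<lambda>r. 2*be/r^3 + 2*ga) r
           = al/r + be*(2/r + 1/r^3) + ga*(4 - r^2)"
proof -
  show "((\<lambda>r. al*r + be/r + ga*r^2) has_real_derivative al - be/r^2 + 2*ga*r) (at r)"
    using r by (auto intro!: derivative_eq_intros simp: field_simps power2_eq_square)
  show "((\<lambda>r. al - be/r^2 + 2*ga*r) has_real_derivative 2*be/r^3 + 2*ga) (at r)"
    using r by (auto intro!: derivative_eq_intros simp: field_simps power2_eq_square power3_eq_cube)
  show "radial_op (\<lambda>r. al*r + be/r + ga*r^2) (\<lambda>r. al - be/r^2 + 2*ga*r) (\<lambda>r. 2*be/r^3 + 2*ga) r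
           = al/r + be*(2/r + 1/r^3) + ga*(4 - r^2)"
    using r by (simp add: radial_op_def field_simps power2_eq_square power3_eq_cube)
qed

text \<open>\<open>L \<psi> = -1/(2r\<^sup>3) + (4 - r\<^sup>2)/100\<close> is negative for every \<open>r > 0\<close>.\<close>
lemma psi_strict_supersolution:
  fixes r :: real
  assumes "0 < r"
  shows "- 1 / (2 * r^3) + (4 - r^2) / 100 < 0"
proof -
  have "2 * r^3 * (4 - r^2) < 100"
  proof (cases "r^2 < 4")
    case True
    then have "r < 2" using power_mono[of 2 r 2] by force
    then have "r^3 < 2^3" using assms by (intro power_strict_mono) auto
    moreover have "4 - r^2 \<le> 4" by simp
    ultimately have "r^3 * (4 - r^2) \<le> 8 * 4"
      using assms True by (intro mult_mono) auto
    then show ?thesis by simp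
  next
    case False
    then have "4 - r^2 \<le> 0" by simp
    then have "2 * r^3 * (4 - r^2) \<le> 0" using assms by (simp add: mult_nonneg_nonpos)
    then show ?thesis by linarith
  qed
  then show ?thesis using assms by (simp add: field_simps)
qed

text \<open>The comparison function \<open>\<Phi> + M\<psi>\<close>, written as \<open>(k+M) r - (kR\<^sup>2 + M/2)/r + (M/100) r\<^sup>2\<close>,
  is a strict supersolution: its radial operator lies strictly below \<open>-S/r\<close>.\<close>
lemma comparison_strict_supersolution:
  fixes R S k M r :: real
  assumes r: "0 < r" and k: "0 \<le> k" "k * (2 * R^2 - 1) = S" and M: "0 < M"
  shows "(k + M)/r + (- (k*R^2 + M/2))*(2/r + 1/r^3) + (M/100)*(4 - r^2) < - S / r"
proof -
  have "(k + M)/r + (- (k*R^2 + M/2))*(2/r + 1/r^3) + (M/100)*(4 - r^2)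
        = - S/r - k*R^2/r^3 + M * (- 1 / (2 * r^3) + (4 - r^2) / 100)"
    unfolding k(2)[symmetric] using r by (simp add: field_simps power3_eq_cube)
  moreover have "0 \<le> k*R^2/r^3" using k r by simp
  moreover have "M * (- 1 / (2 * r^3) + (4 - r^2) / 100) < 0"
    using M psi_strict_supersolution[OF r] by (simp add: mult_pos_neg)
  ultimately show ?thesis by linarith
qed

lemma no_interior_touching:
  fixes v :: "pt \<Rightarrow> real" and Dv :: "pt \<Rightarrow> pt \<Rightarrow>\<^sub>L real"
    and D2v :: "pt \<Rightarrow> pt \<Rightarrow>\<^sub>L (pt \<Rightarrow>\<^sub>L real)" and R S k M :: real
  assumes R: "0 < R" and k: "0 \<le> k" "k * (2 * R^2 - 1) = S" and M: "0 < M" and p: "R < norm p"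
    and dv: "\<forall>x. R < norm x \<longrightarrow> (v has_derivative Dv x) (at x)"
    and d2v: "\<forall>x. R < norm x \<longrightarrow> (Dv has_derivative D2v x) (at x)"
    and super: "\<forall>x. R < norm x \<longrightarrow> - S / norm x \<le> laplacian (D2v x) - Dv x x + v x"
    and below: "\<forall>x. R \<le> norm x \<longrightarrow>
                  v x \<le> k * (norm x - R^2 / norm x) + M * (norm x - 1 / (2 * norm x) + (norm x)^2 / 100)"
    and touch: "v p = k * (norm p - R^2 / norm p) + M * (norm p - 1 / (2 * norm p) + (norm p)^2 / 100)"
  shows False
proof -
  define al be ga where "al = k + M" and "be = - (k * R^2 + M / 2)" and "ga = M / 100"
  have profile: "k * (r - R^2 / r) + M * (r - 1 / (2 * r) + r^2 / 100) = al*r + be/r + ga*r^2" for r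
    by (simp add: al_def be_def ga_def algebra_simps add_divide_distrib diff_divide_distrib)
  define \<delta> where "\<delta> = norm p - R"
  have \<delta>: "0 < \<delta>" "\<delta> \<le> norm p" using p R by (auto simp: \<delta>_def)
  have inside: "R < norm x" if "x \<in> ball p \<delta>" for x
    using that norm_triangle_ineq2[of p x] by (simp add: \<delta>_def dist_norm norm_minus_commute)
  have r: "0 < norm p" using p R by linarith
  have "laplacian (D2v p) - Dv p p + v p
        \<le> radial_op (\<lambda>r. al*r + be/r + ga*r^2) (\<lambda>r. al - be/r^2 + 2*ga*r) (\<lambda>r. 2*be/r^3 + 2*ga) (norm p)"
  proof (rule radial_touching_operator[OF \<delta>])
    show "\<forall>x\<in>ball p \<delta>. (v has_derivative Dv x) (at x)" using dv inside by blast
    show "(Dv has_derivative D2v p) (at p)" using d2v p by blast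
    show "\<forall>x\<in>ball p \<delta>. v x \<le> al * norm x + be / norm x + ga * (norm x)^2"
      using below inside profile by (metis less_imp_le)
    show "v p = al * norm p + be / norm p + ga * (norm p)^2" using touch profile by metis
  qed (use profile_radial_op r in auto)
  also have "\<dots> = al / norm p + be * (2 / norm p + 1 / norm p ^ 3) + ga * (4 - (norm p)^2)"
    using profile_radial_op(3) r by simp
  also have "\<dots> < - S / norm p"
    unfolding al_def be_def ga_def by (rule comparison_strict_supersolution[OF r k M])
  finally show False using super p by fastforce
qed

lemma attains_max_if_small_far_out:
  fixes z :: "'a::{real_normed_vector, heine_borel} \<Rightarrow> real"
  assumes A: "closed A" and z: "continuous_on A z" and q: "q \<in> A"
    and far: "\<forall>x\<in>A. \<rho> < norm x \<longrightarrow> z x \<le> z q"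
  obtains p where "p \<in> A" and "\<forall>x\<in>A. z x \<le> z p"
proof -
  define K where "K = cball 0 (max \<rho> (norm q)) \<inter> A"
  have "compact K" unfolding K_def by (intro compact_Int_closed compact_cball A)
  moreover have "q \<in> K" using q by (simp add: K_def)
  moreover have "continuous_on K z" using z by (rule continuous_on_subset) (auto simp: K_def)
  ultimately obtain p where p: "p \<in> K" and pmax: "\<forall>x\<in>K. z x \<le> z p"
    using continuous_attains_sup by blast
  have "z x \<le> z p" if "x \<in> A" for x
  proof (cases "x \<in> K")
    case False
    then have "\<rho> < norm x" using that by (auto simp: K_def)
    then show ?thesis using far that pmax \<open>q \<in> K\<close> by force
  qed (use pmax in blast)
  then show ?thesis using that p by (auto simp: K_def)
qed

lemma comparison_bounds:
  fixes R r k :: real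
  assumes R: "0 < R" "1 < 2 * R^2" and r: "R \<le> r" and k: "0 \<le> k"
  shows "0 \<le> k * (r - R^2 / r)" and "k * (r - R^2 / r) \<le> k * r"
    and "r^2 / 100 \<le> r - 1 / (2 * r) + r^2 / 100" and "0 < r - 1 / (2 * r) + r^2 / 100"
proof -
  have r0: "0 < r" using R r by linarith
  have sq: "R^2 \<le> r^2" using R r by (intro power_mono) auto
  then have "R^2 / r \<le> r" using r0 by (simp add: field_simps power2_eq_square)
  then show "0 \<le> k * (r - R^2 / r)" using k by simp
  show "k * (r - R^2 / r) \<le> k * r" using k r0 by (simp add: algebra_simps)
  have "1 / (2 * r) < r" using sq R r0 by (simp add: field_simps power2_eq_square)
  moreover have "0 \<le> r^2 / 100" by simp
  ultimately show "r^2 / 100 \<le> r - 1 / (2 * r) + r^2 / 100" and "0 < r - 1 / (2 * r) + r^2 / 100"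
    by linarith+
qed

lemma closed_Omega: "closed (Omega R)"
  unfolding Omega_def by (intro closed_Collect_le continuous_intros)

lemma touching_multiple:
  fixes v \<Phi> \<psi> :: "'a::{real_normed_vector, heine_borel} \<Rightarrow> real"
  assumes A: "closed A" and cont: "continuous_on A v" "continuous_on A \<Phi>" "continuous_on A \<psi>"
    and \<psi>: "\<forall>x\<in>A. 0 < \<psi> x"
    and decay: "\<forall>x\<in>A. (v x - \<Phi> x) / \<psi> x \<le> B / norm x"
    and q: "q \<in> A" "\<Phi> q < v q"
  obtains p M where "p \<in> A" and "0 < M" and "\<forall>x\<in>A. v x \<le> \<Phi> x + M * \<psi> x"
    and "v p = \<Phi> p + M * \<psi> p"
proof -
  define z where "z x = (v x - \<Phi> x) / \<psi> x" for x
  have zq: "0 < z q" using q \<psi> by (simp add: z_def)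
  have far: "\<forall>x\<in>A. \<bar>B\<bar> / z q < norm x \<longrightarrow> z x \<le> z q"
  proof (intro ballI impI)
    fix x assume x: "x \<in> A" "\<bar>B\<bar> / z q < norm x"
    then have "0 < norm x" using zq by (meson abs_ge_zero divide_nonneg_pos le_less_trans)
    then have "\<bar>B\<bar> / norm x < z q" using x(2) zq by (simp add: field_simps)
    then show "z x \<le> z q" using decay x(1) abs_ge_self[of B] \<open>0 < norm x\<close>
      by (smt (verit) divide_right_mono norm_ge_zero z_def)
  qed
  have "continuous_on A z" unfolding z_def using \<psi> by (intro continuous_intros cont) auto
  then obtain p where p: "p \<in> A" and pmax: "\<forall>x\<in>A. z x \<le> z p"
    using attains_max_if_small_far_out[OF A _ q(1) far] by blast
  have "v x \<le> \<Phi> x + z p * \<psi> x" if "x \<in> A" for x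
  proof -
    have "z x \<le> z p" using pmax that by blast
    then have "(v x - \<Phi> x) / \<psi> x \<le> z p" by (simp only: z_def[of x])
    then show ?thesis using \<psi> that by (simp add: pos_divide_le_eq)
  qed
  moreover have "v p = \<Phi> p + z p * \<psi> p" using \<psi>[rule_format, OF p] by (simp add: z_def)
  moreover have "0 < z p" using pmax q zq by force
  ultimately show ?thesis using that p by blast
qed

lemma comparison_quotient_decay:
  fixes R r k C v :: real
  assumes R: "0 < R" "1 < 2 * R^2" and r: "R \<le> r" and k: "0 \<le> k" and v: "v \<le> C * r"
  shows "(v - k * (r - R^2 / r)) / (r - 1 / (2 * r) + r^2 / 100) \<le> 100 * \<bar>C\<bar> / r"
proof -
  note bounds = comparison_bounds[OF R r k]
  have r0: "0 < r" using R r by linarith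
  have "v - k * (r - R^2 / r) \<le> \<bar>C\<bar> * r"
    using v bounds(1) mult_right_mono[OF abs_ge_self[of C], of r] r0 by linarith
  then have "(v - k * (r - R^2 / r)) / (r - 1 / (2 * r) + r^2 / 100)
             \<le> \<bar>C\<bar> * r / (r - 1 / (2 * r) + r^2 / 100)"
    using bounds(4) by (simp add: divide_right_mono)
  also have "\<dots> \<le> \<bar>C\<bar> * r / (r^2 / 100)"
    using bounds(3,4) r0 by (intro divide_left_mono) auto
  also have "\<dots> = 100 * \<bar>C\<bar> / r"
    using r0 by (simp add: field_simps power2_eq_square)
  finally show ?thesis .
qed

text \<open>Otherwise \<open>\<Phi> + M\<psi>\<close> would touch
  \<open>v\<close> from above; the touching point cannot lie on the boundary, where \<open>v = \<Phi> = 0\<close>, and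
  it cannot lie in the interior by the comparison argument.\<close>
lemma exterior_max_principle:
  fixes v :: "pt \<Rightarrow> real" and Dv :: "pt \<Rightarrow> pt \<Rightarrow>\<^sub>L real"
    and D2v :: "pt \<Rightarrow> pt \<Rightarrow>\<^sub>L (pt \<Rightarrow>\<^sub>L real)" and R S C :: real
  assumes R: "0 < R" "1 < 2 * R^2" and S: "0 \<le> S"
    and dv: "\<forall>x. R < norm x \<longrightarrow> (v has_derivative Dv x) (at x)"
    and d2v: "\<forall>x. R < norm x \<longrightarrow> (Dv has_derivative D2v x) (at x)"
    and cont: "continuous_on (Omega R) v"
    and grow: "\<forall>x\<in>Omega R. v x \<le> C * norm x"
    and bd: "\<forall>x. norm x = R \<longrightarrow> v x = 0"
    and super: "\<forall>x. R < norm x \<longrightarrow> - S / norm x \<le> laplacian (D2v x) - Dv x x + v x"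
  shows "\<forall>x\<in>Omega R. v x \<le> S / (2 * R^2 - 1) * norm x"
proof -
  define k where "k = S / (2 * R^2 - 1)"
  have k: "0 \<le> k" "k * (2 * R^2 - 1) = S" using R S by (simp_all add: k_def)
  define \<Phi> \<psi> where "\<Phi> x = k * (norm x - R^2 / norm x)"
    and "\<psi> x = norm x - 1 / (2 * norm x) + (norm x)^2 / 100" for x :: pt
  have OmR: "x \<in> Omega R \<longleftrightarrow> R \<le> norm x" for x by (simp add: Omega_def)
  note bounds = comparison_bounds[OF R _ k(1)]
  have below_barrier: "v q \<le> \<Phi> q" if q: "q \<in> Omega R" for q
  proof (rule ccontr)
    assume "\<not> v q \<le> \<Phi> q"
    moreover have "\<forall>x\<in>Omega R. (v x - \<Phi> x) / \<psi> x \<le> 100 * \<bar>C\<bar> / norm x"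
      using comparison_quotient_decay[OF R _ k(1)] grow OmR by (simp add: \<Phi>_def \<psi>_def)
    moreover have "continuous_on (Omega R) \<Phi>" "continuous_on (Omega R) \<psi>"
      unfolding \<Phi>_def \<psi>_def using R OmR by (auto intro!: continuous_intros)
    moreover have \<psi>: "\<forall>x\<in>Omega R. 0 < \<psi> x" using bounds(4) OmR by (simp add: \<psi>_def)
    ultimately obtain p M where p: "p \<in> Omega R" and M: "0 < M"
      and below: "\<forall>x\<in>Omega R. v x \<le> \<Phi> x + M * \<psi> x" and touch: "v p = \<Phi> p + M * \<psi> p"
      using touching_multiple[OF closed_Omega cont] q by (metis not_le)
    have pR: "R < norm p"
    proof (rule ccontr)
      assume "\<not> R < norm p"
      then have "norm p = R" using p OmR by simp
      then show False
        using touch M \<psi>[rule_format, OF p] bd[rule_format, of p] R by (simp add: \<Phi>_def power2_eq_square)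
    qed
    show False
      by (rule no_interior_touching[OF R(1) k M pR dv d2v super])
         (use below touch OmR in \<open>simp_all add: \<Phi>_def \<psi>_def\<close>)
  qed
  show ?thesis
    using below_barrier bounds(2) OmR by (fastforce simp: \<Phi>_def k_def)
qed

lemma exterior_max_principle_abs:
  fixes v :: "pt \<Rightarrow> real" and Dv :: "pt \<Rightarrow> pt \<Rightarrow>\<^sub>L real"
    and D2v :: "pt \<Rightarrow> pt \<Rightarrow>\<^sub>L (pt \<Rightarrow>\<^sub>L real)" and R S C :: real
  assumes R: "0 < R" "1 < 2 * R^2" and S: "0 \<le> S"
    and dv: "\<forall>x. R < norm x \<longrightarrow> (v has_derivative Dv x) (at x)"
    and d2v: "\<forall>x. R < norm x \<longrightarrow> (Dv has_derivative D2v x) (at x)"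
    and cont: "continuous_on (Omega R) v"
    and grow: "\<forall>x\<in>Omega R. \<bar>v x\<bar> \<le> C * norm x"
    and bd: "\<forall>x. norm x = R \<longrightarrow> v x = 0"
    and eqn: "\<forall>x. R < norm x \<longrightarrow> \<bar>laplacian (D2v x) - Dv x x + v x\<bar> \<le> S / norm x"
  shows "\<forall>x\<in>Omega R. \<bar>v x\<bar> \<le> S / (2 * R^2 - 1) * norm x"
proof -
  have upper: "\<forall>x\<in>Omega R. v x \<le> S / (2 * R^2 - 1) * norm x"
    by (rule exterior_max_principle[where C=C, OF R S dv d2v cont _ bd]) (use grow eqn in \<open>force+\<close>)
  have neg_lap: "laplacian (- D2v x) = - laplacian (D2v x)" for x
    by (simp add: laplacian_def uminus_blinfun.rep_eq)
  have "\<forall>x\<in>Omega R. - v x \<le> S / (2 * R^2 - 1) * norm x"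
  proof (rule exterior_max_principle[where Dv="\<lambda>x. - Dv x" and D2v="\<lambda>x. - D2v x" and C=C, OF R S])
    show "\<forall>x. R < norm x \<longrightarrow> ((\<lambda>x. - v x) has_derivative (- Dv x)) (at x)"
      using dv has_derivative_minus by (fastforce simp: uminus_blinfun.rep_eq fun_Compl_def)
    show "\<forall>x. R < norm x \<longrightarrow> ((\<lambda>x. - Dv x) has_derivative (- D2v x)) (at x)"
      using d2v has_derivative_minus by (fastforce simp: uminus_blinfun.rep_eq fun_Compl_def)
    show "\<forall>x. R < norm x \<longrightarrow> - S / norm x \<le> laplacian (- D2v x) - (- Dv x) x + - v x"
      using eqn by (force simp: neg_lap uminus_blinfun.rep_eq abs_le_iff)
  qed (use cont grow bd in \<open>auto intro: continuous_intros\<close>)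
  with upper show ?thesis by (auto simp: abs_le_iff)
qed

lemma at_within_Omega: "R < norm x \<Longrightarrow> at x within Omega R = at x"
proof -
  assume "R < norm x"
  moreover have "open {y::pt. R < norm y}" by (intro open_Collect_less continuous_intros)
  moreover have "{y::pt. R < norm y} \<subseteq> Omega R" by (auto simp: Omega_def)
  ultimately have "x \<in> interior (Omega R)" by (meson interior_maximal mem_Collect_eq subsetD)
  then show ?thesis by (rule at_within_interior)
qed

lemma C2a_star_interior_derivatives:
  assumes "C2a_star R m \<alpha> v Dv D2v" and "R < norm x"
  shows "(v has_derivative Dv x) (at x)" and "(Dv has_derivative D2v x) (at x)"
proof -
  have "x \<in> Omega R" using assms(2) by (simp add: Omega_def)
  then have "(v has_derivative Dv x) (at x within Omega R)"
    and "(Dv has_derivative D2v x) (at x within Omega R)"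
    using assms(1) unfolding C2a_star_def by blast+
  then show "(v has_derivative Dv x) (at x)" and "(Dv has_derivative D2v x) (at x)"
    unfolding at_within_Omega[OF assms(2)] .
qed

lemma C2a_star_continuous:
  assumes "C2a_star R m \<alpha> v Dv D2v"
  shows "continuous_on (Omega R) v"
proof (rule has_derivative_continuous_on)
  show "(v has_derivative Dv x) (at x within Omega R)" if "x \<in> Omega R" for x
    using assms that unfolding C2a_star_def by blast
qed

lemma linear_growth:
  assumes "wsup_fin R (-1) v" and "0 < R"
  obtains C where "\<forall>x\<in>Omega R. \<bar>v x\<bar> \<le> C * norm x"
proof -
  obtain C where C: "\<forall>x\<in>Omega R. norm (v x) * norm x powr (-1) \<le> C"
    using assms(1) unfolding wsup_fin_def by blast
  have "\<bar>v x\<bar> \<le> C * norm x" if "x \<in> Omega R" for x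
  proof -
    have "0 < norm x" using that assms(2) by (simp add: Omega_def del: zero_less_norm_iff)
    with C that show ?thesis by (simp add: powr_minus divide_inverse pos_divide_le_eq[symmetric])
  qed
  then show ?thesis using that by blast
qed

lemma weighted_sup_bound:
  assumes "wsup_fin R 1 E" and "x \<in> Omega R"
  shows "\<bar>E x\<bar> * norm x \<le> (SUP \<eta>\<in>Omega R. \<bar>E \<eta>\<bar> * norm \<eta>)"
proof (rule cSUP_upper[OF assms(2)])
  obtain C where "\<forall>\<xi>\<in>Omega R. norm (E \<xi>) * norm \<xi> powr 1 \<le> C"
    using assms(1) unfolding wsup_fin_def by blast
  then show "bdd_above ((\<lambda>\<eta>. \<bar>E \<eta>\<bar> * norm \<eta>) ` Omega R)" by (intro bdd_aboveI2) auto
qed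

theorem mainTheorem8:
  fixes m :: nat and \<alpha> Rb :: real
    and E v :: "pt \<Rightarrow> real"
    and Dv :: "pt \<Rightarrow> pt \<Rightarrow>\<^sub>L real"
    and D2v :: "pt \<Rightarrow> pt \<Rightarrow>\<^sub>L (pt \<Rightarrow>\<^sub>L real)"
  assumes "m \<ge> 1" and "0 < \<alpha>" and "\<alpha> < 1"
    and "Rb > 1 / sqrt 2"
    and "C0a_star Rb m \<alpha> E"
    and "C2a_star Rb m \<alpha> v Dv D2v"
    and "\<forall>\<xi>\<in>Omega Rb. laplacian (D2v \<xi>) - blinfun_apply (Dv \<xi>) \<xi> + v \<xi> = E \<xi>"
    and "\<forall>\<xi>. norm \<xi> = Rb \<longrightarrow> v \<xi> = 0"
  shows "\<forall>\<xi>\<in>Omega Rb. \<bar>v \<xi>\<bar> \<le>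
           ((SUP \<eta>\<in>Omega Rb. \<bar>E \<eta>\<bar> * norm \<eta>) / (2 * Rb^2 - 1)) * norm \<xi>"
proof -
  note Rb = assms(4) and CE = assms(5) and Cv = assms(6) and eqn = assms(7) and bd = assms(8)
  define S where "S = (SUP \<eta>\<in>Omega Rb. \<bar>E \<eta>\<bar> * norm \<eta>)"
  have R0: "0 < Rb" using Rb by (smt (verit) divide_pos_pos real_sqrt_gt_zero)
  have "(1 / sqrt 2)^2 < Rb^2" using Rb by (intro power_strict_mono) auto
  then have R2: "1 < 2 * Rb^2" by (simp add: power_divide)
  have wE: "wsup_fin Rb 1 E" using CE by (simp add: C0a_star_def)
  have S: "\<bar>E x\<bar> * norm x \<le> S" if "x \<in> Omega Rb" for x
    unfolding S_def using weighted_sup_bound[OF wE that] .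
  have "(Rb, 0) \<in> Omega Rb" using R0 by (simp add: Omega_def norm_Pair)
  from S[OF this] have S0: "0 \<le> S" by (meson abs_ge_zero mult_nonneg_nonneg norm_ge_zero order_trans)
  obtain C where grow: "\<forall>x\<in>Omega Rb. \<bar>v x\<bar> \<le> C * norm x"
    using linear_growth[OF _ R0] Cv by (auto simp: C2a_star_def)
  have "\<forall>x. Rb < norm x \<longrightarrow> \<bar>laplacian (D2v x) - Dv x x + v x\<bar> \<le> S / norm x"
  proof (intro allI impI)
    fix x :: pt assume "Rb < norm x"
    then have x: "x \<in> Omega Rb" "0 < norm x" using R0 by (simp_all add: Omega_def del: zero_less_norm_iff)
    then show "\<bar>laplacian (D2v x) - Dv x x + v x\<bar> \<le> S / norm x"
      using eqn S[OF x(1)] by (simp add: pos_le_divide_eq)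
  qed
  with exterior_max_principle_abs[OF R0 R2 S0 _ _ C2a_star_continuous[OF Cv] grow bd]
  show ?thesis unfolding S_def using C2a_star_interior_derivatives[OF Cv] by blast
qed

end
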